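(* In the setting below, for every $w\in W_M^Q$, \[ (\chi^M_w-\chi^H_w)(x_Q) = |I_w^M\le s|. \]
   Context: Fix $1\le k\le s<r$. Let $\epsilon_1,\ldots,\epsilon_r$ be an orthonormal basis of a real/complex weight space $\mathfrak{h}^*$, $\epsilon_1^*,\ldots,\epsilon_r^*$ the dual basis of $\mathfrak{h}$. $M=\mathrm{Sp}(2s)\times\mathrm{Sp}(2(r-s))$ has positive roots $R_M^+$: $\epsilon_i\pm\epsilon_j$ ($1\le i<j\le s$), $2\epsilon_i$ ($1\le i\le s$), and $\epsilon_i\pm\epsilon_j$ ($s<i<j\le r$), $2\epsilon_i$ ($s<i\le r$). $H=\mathrm{SO}(2s+1)\times\mathrm{Sp}(2(r-s))$ has the same weight space, positive roots $R^+_H$: $\epsilon_i\pm\epsilon_j$ ($1\le i<j\le s$), $\epsilon_i$ ($1\le i\le s$), and the same second-factor roots as $M$. $M$ and $H$ share the Weyl group $W_M$. $Q$ is the maximal parabolic of $M$ associated to omitting the simple root $\epsilon_k-\epsilon_{k+1}$ of the first factor (so $M/Q\cong\mathrm{IG}(k,2s)$), $Q^H$ the corresponding parabolic of $H$, and $W_M^Q$ the minimal length coset representatives (the same for $Q$ and $Q^H$). $x_Q=\sum_{i=1}^k\epsilon_i^*$. $\chi^M_w=\sum_{\beta\in(R^+_M\setminus R^+_{L})\cap w^{-1}R^+_M}\beta$ with $R^+_L$ the positive roots of the Levi of $Q$, and $\chi^H_w$ defined likewise with $R^+_H$ and the Levi of $Q^H$. $I^M_w\subseteq\{1,\ldots,2s\}$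 is the $k$-subset indexing the Schubert cell $C^M_w$ of $\mathrm{IG}(k,2s)$ relative to the standard isotropic flag of $\mathbb{C}^{2s}$ with ordered basis $e_1,\ldots,e_s,e_s',\ldots,e_1'$ (the cell being $\{W:\dim(W\cap F_j)=|\{i\in I^M_w:i\le j\}|\ \forall j\}$), and $|I\le s|$ is the number of elements of $I$ that are $\le s$. *)

theory Defs
  imports Main "HOL-Library.Function_Algebras"
begin

text \<open>Weights are integer coordinate vectors: a weight lambda = sum_i lambda_i eps_i
  is represented by the function i -> lambda_i (only indices 1..r are used).\<close>

definition eps :: "nat \<Rightarrow> nat \<Rightarrow> int" where
  "eps i = (\<lambda>j. if j = i then 1 else 0)"

definition typeC_pos :: "nat \<Rightarrow> nat \<Rightarrow> (nat \<Rightarrow> int) set" where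
  "typeC_pos a b =
     {eps i - eps j | i j. a < i \<and> i < j \<and> j \<le> b}
   \<union> {eps i + eps j | i j. a < i \<and> i < j \<and> j \<le> b}
   \<union> {(\<lambda>l. 2 * eps i l) | i. a < i \<and> i \<le> b}"

definition typeB_pos :: "nat \<Rightarrow> nat \<Rightarrow> (nat \<Rightarrow> int) set" where
  "typeB_pos a b =
     {eps i - eps j | i j. a < i \<and> i < j \<and> j \<le> b}
   \<union> {eps i + eps j | i j. a < i \<and> i < j \<and> j \<le> b}
   \<union> {eps i | i. a < i \<and> i \<le> b}"

definition typeA_pos :: "nat \<Rightarrow> nat \<Rightarrow> (nat \<Rightarrow> int) set" where
  "typeA_pos a b = {eps i - eps j | i j. a < i \<and> i < j \<and> j \<le> b}"

text \<open>R_M^+ for M = Sp(2s) x Sp(2(r-s)), R_H^+ for H = SO(2s+1) x Sp(2(r-s)).\<close>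
definition RM :: "nat \<Rightarrow> nat \<Rightarrow> (nat \<Rightarrow> int) set" where
  "RM s r = typeC_pos 0 s \<union> typeC_pos s r"

definition RH :: "nat \<Rightarrow> nat \<Rightarrow> (nat \<Rightarrow> int) set" where
  "RH s r = typeB_pos 0 s \<union> typeC_pos s r"

text \<open>Positive roots of the Levi of Q (GL(k) x Sp(2(s-k)) x Sp(2(r-s))) and of
  the Levi of Q^H (GL(k) x SO(2(s-k)+1) x Sp(2(r-s))).\<close>
definition RL :: "nat \<Rightarrow> nat \<Rightarrow> nat \<Rightarrow> (nat \<Rightarrow> int) set" where
  "RL k s r = typeA_pos 0 k \<union> typeC_pos k s \<union> typeC_pos s r"

definition RLH :: "nat \<Rightarrow> nat \<Rightarrow> nat \<Rightarrow> (nat \<Rightarrow> int) set" where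
  "RLH k s r = typeA_pos 0 k \<union> typeB_pos k s \<union> typeC_pos s r"

text \<open>The Weyl group W_M: signed permutations of {1..r} preserving the blocks
  {1..s} and {s+1..r}. An element w is encoded by f :: nat => int with
  w(eps_i) = sgn(f i) eps_|f i| for 1 <= i <= r, and f i = 0 otherwise.\<close>
definition WM :: "nat \<Rightarrow> nat \<Rightarrow> (nat \<Rightarrow> int) set" where
  "WM s r = {f. (\<forall>i. i \<notin> {1..r} \<longrightarrow> f i = 0)
     \<and> (\<forall>i\<in>{1..r}. f i \<noteq> 0 \<and> nat \<bar>f i\<bar> \<in> {1..r} \<and> (i \<le> s \<longleftrightarrow> nat \<bar>f i\<bar> \<le> s))
     \<and> inj_on (\<lambda>i. nat \<bar>f i\<bar>) {1..r}}"

definition act :: "nat \<Rightarrow> (nat \<Rightarrow> int) \<Rightarrow> (nat \<Rightarrow> int) \<Rightarrow> (nat \<Rightarrow> int)" where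
  "act r f lam = (\<lambda>j. \<Sum>i\<in>{1..r}. if nat \<bar>f i\<bar> = j then sgn (f i) * lam i else 0)"

definition comp :: "nat \<Rightarrow> (nat \<Rightarrow> int) \<Rightarrow> (nat \<Rightarrow> int) \<Rightarrow> (nat \<Rightarrow> int)" where
  "comp r w u = (\<lambda>i. if i \<in> {1..r} then sgn (u i) * w (nat \<bar>u i\<bar>) else 0)"

text \<open>Weyl group of the Levi of Q: S_k x W(C_{s-k}) x W(C_{r-s}).\<close>
definition WL :: "nat \<Rightarrow> nat \<Rightarrow> nat \<Rightarrow> (nat \<Rightarrow> int) set" where
  "WL k s r = {u \<in> WM s r. \<forall>i\<in>{1..k}. 0 < u i \<and> u i \<le> int k}"

definition lenM :: "nat \<Rightarrow> nat \<Rightarrow> (nat \<Rightarrow> int) \<Rightarrow> nat" where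
  "lenM s r w = card {\<alpha> \<in> RM s r. act r w \<alpha> \<notin> RM s r}"

definition WQ :: "nat \<Rightarrow> nat \<Rightarrow> nat \<Rightarrow> (nat \<Rightarrow> int) set" where
  "WQ k s r = {w \<in> WM s r. \<forall>u \<in> WL k s r. lenM s r w \<le> lenM s r (comp r w u)}"

definition chiM :: "nat \<Rightarrow> nat \<Rightarrow> nat \<Rightarrow> (nat \<Rightarrow> int) \<Rightarrow> (nat \<Rightarrow> int)" where
  "chiM k s r w = (\<Sum>\<beta> \<in> (RM s r - RL k s r) \<inter> {\<beta>. act r w \<beta> \<in> RM s r}. \<beta>)"

definition chiH :: "nat \<Rightarrow> nat \<Rightarrow> nat \<Rightarrow> (nat \<Rightarrow> int) \<Rightarrow> (nat \<Rightarrow> int)" where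
  "chiH k s r w = (\<Sum>\<beta> \<in> (RH s r - RLH k s r) \<inter> {\<beta>. act r w \<beta> \<in> RH s r}. \<beta>)"

text \<open>Evaluation of a weight at x_Q = eps_1^* + ... + eps_k^*.\<close>
definition evxQ :: "nat \<Rightarrow> (nat \<Rightarrow> int) \<Rightarrow> int" where
  "evxQ k lam = (\<Sum>i\<in>{1..k}. lam i)"

text \<open>I_w^M: positions (in the ordered basis e_1..e_s,e_s'..e_1', e_j' at position
  2s+1-j) of the basis vectors w(e_1),...,w(e_k) spanning the T-fixed point w Q of
  the Schubert cell C_w = B w Q / Q.\<close>
definition IM :: "nat \<Rightarrow> nat \<Rightarrow> (nat \<Rightarrow> int) \<Rightarrow> nat set" where
  "IM k s w = (\<lambda>i. if 0 < w i then nat (w i) else 2 * s + 1 - nat \<bar>w i\<bar>) ` {1..k}"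

end

theory Submission imports Defs begin

text \<open>Apart from the roots \<open>2\<epsilon>\<^sub>i\<close> of \<open>M\<close> and \<open>\<epsilon>\<^sub>i\<close> of \<open>H\<close> for \<open>i \<le> s\<close>,
  the two root systems and their Levi subsystems coincide. A common root is never sent by
  \<open>w\<close> to a multiple of a single \<open>\<epsilon>\<^sub>i\<close> with \<open>i \<le> s\<close>, so it contributes equally to
  \<open>\<chi>\<^sup>M\<^sub>w\<close> and \<open>\<chi>\<^sup>H\<^sub>w\<close>. The remaining contributions are \<open>2\<epsilon>\<^sub>i\<close>, resp. \<open>\<epsilon>\<^sub>i\<close>, for the
  \<open>i \<le> k\<close> with \<open>w(\<epsilon>\<^sub>i)\<close> positive, so the difference evaluates at \<open>x\<^sub>Q\<close> to the
  number of such \<open>i\<close>; these are exactly the indices giving elements \<open>\<le> s\<close> of \<open>I\<^sup>M\<^sub>w\<close>.\<close>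

lemma sum_apply: "(\<Sum>a\<in>A. f a) x = (\<Sum>a\<in>A. f a x)"
  by (induction A rule: infinite_finite_induct) auto

definition pair_roots :: "nat \<Rightarrow> nat \<Rightarrow> (nat \<Rightarrow> int) set" where
  "pair_roots a b = {eps i - eps j | i j. a < i \<and> i < j \<and> j \<le> b}
     \<union> {eps i + eps j | i j. a < i \<and> i < j \<and> j \<le> b}"

definition long_roots :: "nat \<Rightarrow> nat \<Rightarrow> (nat \<Rightarrow> int) set" where
  "long_roots a b = (\<lambda>i l. 2 * eps i l) ` {a<..b}"

definition short_roots :: "nat \<Rightarrow> nat \<Rightarrow> (nat \<Rightarrow> int) set" where
  "short_roots a b = eps ` {a<..b}"

lemma typeC_pos_eq: "typeC_pos a b = pair_roots a b \<union> long_roots a b"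
  unfolding typeC_pos_def pair_roots_def long_roots_def by auto

lemma typeB_pos_eq: "typeB_pos a b = pair_roots a b \<union> short_roots a b"
  unfolding typeB_pos_def pair_roots_def short_roots_def by auto

lemma typeA_pos_subset_pair_roots: "typeA_pos a b \<subseteq> pair_roots a b"
  unfolding typeA_pos_def pair_roots_def by blast

lemma pair_roots_mono: "a \<le> a' \<Longrightarrow> b' \<le> b \<Longrightarrow> pair_roots a' b' \<subseteq> pair_roots a b"
  unfolding pair_roots_def by fastforce

lemma finite_pair_roots: "finite (pair_roots a b)"
proof -
  have "pair_roots a b \<subseteq> (\<lambda>(i, j). eps i - eps j) ` ({..b} \<times> {..b})
      \<union> (\<lambda>(i, j). eps i + eps j) ` ({..b} \<times> {..b})"
    unfolding pair_roots_def by force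
  then show ?thesis
    by (rule finite_subset) auto
qed

lemma inj_eps: "inj eps"
  by (rule injI) (metis eps_def zero_neq_one)

lemma inj_double_eps: "inj (\<lambda>i l. 2 * eps i l :: int)"
  by (rule injI) (metis eps_def mult_cancel_left zero_neq_numeral zero_neq_one)

lemma long_roots_diff: "a \<le> m \<Longrightarrow> m \<le> b \<Longrightarrow> long_roots a b - long_roots m b = long_roots a m"
  unfolding long_roots_def image_set_diff[OF inj_double_eps, symmetric]
  by (rule arg_cong[where f = "image _"]) auto

lemma short_roots_diff: "a \<le> m \<Longrightarrow> m \<le> b \<Longrightarrow> short_roots a b - short_roots m b = short_roots a m"
  unfolding short_roots_def image_set_diff[OF inj_eps, symmetric]
  by (rule arg_cong[where f = "image _"]) auto

lemma long_roots_mono: "a \<le> a' \<Longrightarrow> b' \<le> b \<Longrightarrow> long_roots a' b' \<subseteq> long_roots a b"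
  unfolding long_roots_def by (rule image_mono) auto

lemma short_roots_mono: "a \<le> a' \<Longrightarrow> b' \<le> b \<Longrightarrow> short_roots a' b' \<subseteq> short_roots a b"
  unfolding short_roots_def by (rule image_mono) auto

definition on_first_axis :: "nat \<Rightarrow> (nat \<Rightarrow> int) \<Rightarrow> bool" where
  "on_first_axis s x \<longleftrightarrow> (\<exists>i\<in>{1..s}. \<forall>j. x j \<noteq> 0 \<longrightarrow> j = i)"

lemma first_block_roots_on_first_axis:
  "x \<in> long_roots 0 s \<union> short_roots 0 s \<Longrightarrow> on_first_axis s x"
  unfolding long_roots_def short_roots_def on_first_axis_def by (auto simp: eps_def)

definition common_roots :: "nat \<Rightarrow> nat \<Rightarrow> (nat \<Rightarrow> int) set" where
  "common_roots s r = pair_roots 0 s \<union> pair_roots s r \<union> long_roots s r"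

definition common_levi_roots :: "nat \<Rightarrow> nat \<Rightarrow> nat \<Rightarrow> (nat \<Rightarrow> int) set" where
  "common_levi_roots k s r = typeA_pos 0 k \<union> pair_roots k s \<union> pair_roots s r \<union> long_roots s r"

lemma finite_common_roots: "finite (common_roots s r)"
  unfolding common_roots_def long_roots_def using finite_pair_roots by blast

lemma common_rootsE:
  assumes "x \<in> common_roots s r" "s \<le> r"
  obtains (pair) i j where "0 < i" "i < j" "j \<le> r" "x = eps i - eps j \<or> x = eps i + eps j"
    | (long) i where "s < i" "i \<le> r" "x = (\<lambda>l. 2 * eps i l)"
proof -
  from assms(1) consider "x \<in> pair_roots 0 s \<union> pair_roots s r" | "x \<in> long_roots s r"
    unfolding common_roots_def by blast
  then show thesis
  proof cases
    case 1
    then have "x \<in> pair_roots 0 r"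
      using pair_roots_mono[of 0 0 s r] pair_roots_mono[of 0 s r r] assms(2) by auto
    then show thesis
      unfolding pair_roots_def using pair by blast
  next
    case 2
    then show thesis
      unfolding long_roots_def using long by auto
  qed
qed

lemma common_roots_not_on_first_axis:
  assumes "x \<in> common_roots s r" "s \<le> r"
  shows "\<not> on_first_axis s x"
proof
  assume "on_first_axis s x"
  then obtain m where m: "m \<le> s" "\<And>j. x j \<noteq> 0 \<Longrightarrow> j = m"
    unfolding on_first_axis_def by auto
  from assms show False
  proof (cases rule: common_rootsE)
    case (pair i j)
    then have "x i \<noteq> 0" "x j \<noteq> 0" by (auto simp: eps_def)
    then have "i = m" "j = m" using m(2) by blast+
    with \<open>i < j\<close> show False by simp
  next
    case (long i)
    then have "x i \<noteq> 0" by (simp add: eps_def)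
    with m long(1) show False by fastforce
  qed
qed

lemma common_roots_support:
  assumes "x \<in> common_roots s r" "s \<le> r" "x j \<noteq> 0"
  shows "j \<in> {1..r}"
  using assms(1,2)
proof (cases rule: common_rootsE)
  case (pair i j')
  with assms(3) show ?thesis by (auto simp: eps_def split: if_splits)
next
  case (long i)
  with assms(3) show ?thesis by (auto simp: eps_def split: if_splits)
qed

lemma RM_eq: "RM s r = common_roots s r \<union> long_roots 0 s"
  unfolding RM_def common_roots_def typeC_pos_eq by blast

lemma RH_eq: "RH s r = common_roots s r \<union> short_roots 0 s"
  unfolding RH_def common_roots_def typeC_pos_eq typeB_pos_eq by blast

lemma common_roots_disjoint_first_block:
  "s \<le> r \<Longrightarrow> common_roots s r \<inter> (long_roots 0 s \<union> short_roots 0 s) = {}"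
  using first_block_roots_on_first_axis common_roots_not_on_first_axis by blast

lemma common_levi_roots_subset: "k \<le> s \<Longrightarrow> common_levi_roots k s r \<subseteq> common_roots s r"
  using typeA_pos_subset_pair_roots[of 0 k] pair_roots_mono[of 0 0 k s] pair_roots_mono[of 0 k s s]
  unfolding common_levi_roots_def common_roots_def by blast

lemma diff_Un_diff_Un:
  "Y \<subseteq> C \<Longrightarrow> F \<subseteq> E \<Longrightarrow> C \<inter> E = {} \<Longrightarrow> (C \<union> E) - (Y \<union> F) = (C - Y) \<union> (E - F)"
  by blast

lemma RM_minus_RL:
  assumes "k \<le> s" "s \<le> r"
  shows "RM s r - RL k s r = (common_roots s r - common_levi_roots k s r) \<union> long_roots 0 k"
proof -
  have "RL k s r = common_levi_roots k s r \<union> long_roots k s"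
    unfolding RL_def common_levi_roots_def typeC_pos_eq by blast
  moreover have "common_roots s r \<inter> long_roots 0 s = {}"
    using common_roots_disjoint_first_block[OF assms(2)] by blast
  ultimately show ?thesis
    unfolding RM_eq using diff_Un_diff_Un[OF common_levi_roots_subset[OF assms(1)] long_roots_mono]
    by (simp add: long_roots_diff assms)
qed

lemma RH_minus_RLH:
  assumes "k \<le> s" "s \<le> r"
  shows "RH s r - RLH k s r = (common_roots s r - common_levi_roots k s r) \<union> short_roots 0 k"
proof -
  have "RLH k s r = common_levi_roots k s r \<union> short_roots k s"
    unfolding RLH_def common_levi_roots_def typeC_pos_eq typeB_pos_eq by blast
  moreover have "common_roots s r \<inter> short_roots 0 s = {}"
    using common_roots_disjoint_first_block[OF assms(2)] by blast
  ultimately show ?thesis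
    unfolding RH_eq using diff_Un_diff_Un[OF common_levi_roots_subset[OF assms(1)] short_roots_mono]
    by (simp add: short_roots_diff assms)
qed

lemma WM_nonzero: "w \<in> WM s r \<Longrightarrow> i \<in> {1..r} \<Longrightarrow> w i \<noteq> 0"
  unfolding WM_def by blast

lemma WM_block: "w \<in> WM s r \<Longrightarrow> i \<in> {1..r} \<Longrightarrow> i \<le> s \<longleftrightarrow> nat \<bar>w i\<bar> \<le> s"
  unfolding WM_def by blast

lemma WM_range: "w \<in> WM s r \<Longrightarrow> i \<in> {1..r} \<Longrightarrow> nat \<bar>w i\<bar> \<in> {1..r}"
  unfolding WM_def by blast

lemma WM_inj: "w \<in> WM s r \<Longrightarrow> inj_on (\<lambda>i. nat \<bar>w i\<bar>) {1..r}"
  unfolding WM_def by blast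

lemma act_apply:
  assumes "w \<in> WM s r" "i \<in> {1..r}"
  shows "act r w x (nat \<bar>w i\<bar>) = sgn (w i) * x i"
proof -
  have "act r w x (nat \<bar>w i\<bar>) = (\<Sum>i'\<in>{1..r}. if i' = i then sgn (w i') * x i' else 0)"
    unfolding act_def using inj_onD[OF WM_inj[OF assms(1)] _ _ assms(2)] by (intro sum.cong) auto
  also have "\<dots> = sgn (w i) * x i"
    using assms(2) by simp
  finally show ?thesis .
qed

lemma act_eps: "i \<in> {1..r} \<Longrightarrow> act r w (eps i) = (\<lambda>l. sgn (w i) * eps (nat \<bar>w i\<bar>) l)"
proof
  fix l assume i: "i \<in> {1..r}"
  have "act r w (eps i) l = (\<Sum>i'\<in>{1..r}. if i' = i then (if nat \<bar>w i\<bar> = l then sgn (w i) else 0) else 0)"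
    unfolding act_def eps_def by (intro sum.cong) auto
  also have "\<dots> = sgn (w i) * eps (nat \<bar>w i\<bar>) l"
    using i by (simp add: eps_def)
  finally show "act r w (eps i) l = sgn (w i) * eps (nat \<bar>w i\<bar>) l" .
qed

lemma act_double: "act r w (\<lambda>l. 2 * x l) = (\<lambda>l. 2 * act r w x l)"
  unfolding act_def sum_distrib_left by (intro ext sum.cong) auto

lemma on_first_axis_act:
  assumes w: "w \<in> WM s r" and supp: "\<And>j. x j \<noteq> 0 \<Longrightarrow> j \<in> {1..r}"
    and "on_first_axis s (act r w x)"
  shows "on_first_axis s x"
proof -
  obtain a where a: "a \<in> {1..s}" "\<And>j. act r w x j \<noteq> 0 \<Longrightarrow> j = a"
    using assms(3) unfolding on_first_axis_def by blast
  have hit: "nat \<bar>w j\<bar> = a" if "x j \<noteq> 0" for j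
    using a(2)[of "nat \<bar>w j\<bar>"] that act_apply[OF w supp[OF that]] WM_nonzero[OF w supp[OF that]]
    by (simp add: sgn_0_0)
  show ?thesis
  proof (cases "\<exists>j. x j \<noteq> 0")
    case True
    then obtain j0 where j0: "x j0 \<noteq> 0" by blast
    have "j0 \<in> {1..s}"
      using supp[OF j0] WM_block[OF w supp[OF j0]] hit[OF j0] a(1) by auto
    moreover have "j = j0" if "x j \<noteq> 0" for j
      using inj_onD[OF WM_inj[OF w] _ supp[OF that] supp[OF j0]] hit that j0 by auto
    ultimately show ?thesis
      unfolding on_first_axis_def by blast
  next
    case False
    with a(1) show ?thesis
      unfolding on_first_axis_def by blast
  qed
qed

lemma act_common_root_in_RM_iff_RH:
  assumes "w \<in> WM s r" "s \<le> r" "\<beta> \<in> common_roots s r"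
  shows "act r w \<beta> \<in> RM s r \<longleftrightarrow> act r w \<beta> \<in> RH s r"
proof -
  have "\<not> on_first_axis s (act r w \<beta>)"
    using on_first_axis_act[OF assms(1) common_roots_support[OF assms(3,2)]]
      common_roots_not_on_first_axis[OF assms(3,2)] by blast
  then have "act r w \<beta> \<notin> long_roots 0 s \<union> short_roots 0 s"
    using first_block_roots_on_first_axis by blast
  then show ?thesis
    unfolding RM_eq RH_eq by blast
qed

lemma pair_roots_positive_coordinate: "x \<in> pair_roots a b \<Longrightarrow> \<exists>j. 0 < x j"
proof -
  assume "x \<in> pair_roots a b"
  then obtain i j where "i < j" "x = eps i - eps j \<or> x = eps i + eps j"
    unfolding pair_roots_def by blast
  then have "0 < x i" by (auto simp: eps_def)
  then show ?thesis ..
qed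

lemma long_roots_positive_coordinate: "x \<in> long_roots a b \<Longrightarrow> \<exists>j. 0 < x j"
proof -
  assume "x \<in> long_roots a b"
  then obtain i where "x = (\<lambda>l. 2 * eps i l)"
    unfolding long_roots_def by blast
  then have "0 < x i" by (simp add: eps_def)
  then show ?thesis ..
qed

lemma short_roots_positive_coordinate: "x \<in> short_roots a b \<Longrightarrow> \<exists>j. 0 < x j"
proof -
  assume "x \<in> short_roots a b"
  then obtain i where "x = eps i"
    unfolding short_roots_def by blast
  then have "0 < x i" by (simp add: eps_def)
  then show ?thesis ..
qed

lemma roots_positive_coordinate: "x \<in> RM s r \<union> RH s r \<Longrightarrow> \<exists>j. 0 < x j"
  unfolding RM_eq RH_eq common_roots_def
  by (elim UnE)
    (auto dest: pair_roots_positive_coordinate long_roots_positive_coordinate short_roots_positive_coordinate)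

lemma act_long_root_in_RM_iff:
  assumes w: "w \<in> WM s r" and i: "i \<in> {1..s}" and "s \<le> r"
  shows "act r w (\<lambda>l. 2 * eps i l) \<in> RM s r \<longleftrightarrow> 0 < w i"
proof -
  have ir: "i \<in> {1..r}" using i assms(3) by auto
  define a where "a = nat \<bar>w i\<bar>"
  have a: "a \<in> {1..s}" using WM_range[OF w ir] WM_block[OF w ir] i unfolding a_def by auto
  have image: "act r w (\<lambda>l. 2 * eps i l) = (\<lambda>l. 2 * sgn (w i) * eps a l)"
    by (simp add: act_double act_eps[OF ir] a_def mult.assoc)
  show ?thesis
  proof
    assume "act r w (\<lambda>l. 2 * eps i l) \<in> RM s r"
    then obtain j where "0 < 2 * sgn (w i) * eps a j"
      using roots_positive_coordinate image by fastforce
    then show "0 < w i"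
      by (auto simp: eps_def sgn_if split: if_splits)
  next
    assume "0 < w i"
    then have "act r w (\<lambda>l. 2 * eps i l) \<in> long_roots 0 s"
      using a unfolding image long_roots_def by auto
    then show "act r w (\<lambda>l. 2 * eps i l) \<in> RM s r"
      unfolding RM_eq by blast
  qed
qed

lemma act_short_root_in_RH_iff:
  assumes w: "w \<in> WM s r" and i: "i \<in> {1..s}" and "s \<le> r"
  shows "act r w (eps i) \<in> RH s r \<longleftrightarrow> 0 < w i"
proof -
  have ir: "i \<in> {1..r}" using i assms(3) by auto
  define a where "a = nat \<bar>w i\<bar>"
  have a: "a \<in> {1..s}" using WM_range[OF w ir] WM_block[OF w ir] i unfolding a_def by auto
  have image: "act r w (eps i) = (\<lambda>l. sgn (w i) * eps a l)"
    by (simp add: act_eps[OF ir] a_def)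
  show ?thesis
  proof
    assume "act r w (eps i) \<in> RH s r"
    then obtain j where "0 < sgn (w i) * eps a j"
      using roots_positive_coordinate image by fastforce
    then show "0 < w i"
      by (auto simp: eps_def sgn_if split: if_splits)
  next
    assume "0 < w i"
    then have "act r w (eps i) \<in> short_roots 0 s"
      using a unfolding image short_roots_def by auto
    then show "act r w (eps i) \<in> RH s r"
      unfolding RH_eq by blast
  qed
qed

definition positive_indices :: "nat \<Rightarrow> (nat \<Rightarrow> int) \<Rightarrow> nat set" where
  "positive_indices k w = {i \<in> {1..k}. 0 < w i}"

lemma chiM_eq:
  assumes w: "w \<in> WM s r" and "k \<le> s" "s \<le> r"
  shows "chiM k s r w =
    (\<Sum>\<beta> \<in> (common_roots s r - common_levi_roots k s r) \<inter> {\<beta>. act r w \<beta> \<in> RM s r}. \<beta>)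
    + (\<Sum>i\<in>positive_indices k w. (\<lambda>l. 2 * eps i l))"
proof -
  have long: "long_roots 0 k \<inter> {\<beta>. act r w \<beta> \<in> RM s r} = (\<lambda>i l. 2 * eps i l) ` positive_indices k w"
    using act_long_root_in_RM_iff[OF w _ assms(3)] assms(2)
    unfolding long_roots_def positive_indices_def by force
  have "common_roots s r \<inter> long_roots 0 k = {}"
    using common_roots_disjoint_first_block[OF assms(3)] long_roots_mono[of 0 0 k s] assms(2) by blast
  then have "chiM k s r w =
    (\<Sum>\<beta> \<in> (common_roots s r - common_levi_roots k s r) \<inter> {\<beta>. act r w \<beta> \<in> RM s r}. \<beta>)
    + (\<Sum>\<beta> \<in> long_roots 0 k \<inter> {\<beta>. act r w \<beta> \<in> RM s r}. \<beta>)"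
    unfolding chiM_def RM_minus_RL[OF assms(2,3)] Int_Un_distrib2
    by (intro sum.union_disjoint) (auto simp: finite_common_roots long_roots_def)
  also have "(\<Sum>\<beta> \<in> long_roots 0 k \<inter> {\<beta>. act r w \<beta> \<in> RM s r}. \<beta>)
      = (\<Sum>i\<in>positive_indices k w. (\<lambda>l. 2 * eps i l))"
    unfolding long by (rule sum.reindex_cong[OF inj_on_subset[OF inj_double_eps]]) auto
  finally show ?thesis .
qed

lemma chiH_eq:
  assumes w: "w \<in> WM s r" and "k \<le> s" "s \<le> r"
  shows "chiH k s r w =
    (\<Sum>\<beta> \<in> (common_roots s r - common_levi_roots k s r) \<inter> {\<beta>. act r w \<beta> \<in> RH s r}. \<beta>)
    + (\<Sum>i\<in>positive_indices k w. eps i)"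
proof -
  have short: "short_roots 0 k \<inter> {\<beta>. act r w \<beta> \<in> RH s r} = eps ` positive_indices k w"
    using act_short_root_in_RH_iff[OF w _ assms(3)] assms(2)
    unfolding short_roots_def positive_indices_def by force
  have "common_roots s r \<inter> short_roots 0 k = {}"
    using common_roots_disjoint_first_block[OF assms(3)] short_roots_mono[of 0 0 k s] assms(2) by blast
  then have "chiH k s r w =
    (\<Sum>\<beta> \<in> (common_roots s r - common_levi_roots k s r) \<inter> {\<beta>. act r w \<beta> \<in> RH s r}. \<beta>)
    + (\<Sum>\<beta> \<in> short_roots 0 k \<inter> {\<beta>. act r w \<beta> \<in> RH s r}. \<beta>)"
    unfolding chiH_def RH_minus_RLH[OF assms(2,3)] Int_Un_distrib2
    by (intro sum.union_disjoint) (auto simp: finite_common_roots short_roots_def)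
  also have "(\<Sum>\<beta> \<in> short_roots 0 k \<inter> {\<beta>. act r w \<beta> \<in> RH s r}. \<beta>) = (\<Sum>i\<in>positive_indices k w. eps i)"
    unfolding short by (rule sum.reindex_cong[OF inj_on_subset[OF inj_eps]]) auto
  finally show ?thesis .
qed

lemma chiM_minus_chiH:
  assumes "w \<in> WM s r" "k \<le> s" "s \<le> r"
  shows "chiM k s r w - chiH k s r w = (\<Sum>i\<in>positive_indices k w. eps i)"
proof -
  have "(common_roots s r - common_levi_roots k s r) \<inter> {\<beta>. act r w \<beta> \<in> RM s r}
      = (common_roots s r - common_levi_roots k s r) \<inter> {\<beta>. act r w \<beta> \<in> RH s r}"
    using act_common_root_in_RM_iff_RH[OF assms(1,3)] by blast
  then have "chiM k s r w - chiH k s r w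
      = (\<Sum>i\<in>positive_indices k w. (\<lambda>l. 2 * eps i l)) - (\<Sum>i\<in>positive_indices k w. eps i)"
    unfolding chiM_eq[OF assms] chiH_eq[OF assms] by simp
  also have "\<dots> = (\<Sum>i\<in>positive_indices k w. (\<lambda>l. 2 * eps i l) - eps i)"
    by (rule sum_subtractf[symmetric])
  also have "\<dots> = (\<Sum>i\<in>positive_indices k w. eps i)"
    by (rule sum.cong) (auto simp: fun_eq_iff)
  finally show ?thesis .
qed

lemma evxQ_sum_eps: "A \<subseteq> {1..k} \<Longrightarrow> evxQ k (\<Sum>i\<in>A. eps i) = int (card A)"
proof -
  assume A: "A \<subseteq> {1..k}"
  have "evxQ k (\<Sum>i\<in>A. eps i) = (\<Sum>i\<in>A. \<Sum>j\<in>{1..k}. eps i j)"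
    unfolding evxQ_def sum_apply by (rule sum.swap)
  also have "\<dots> = (\<Sum>i\<in>A. 1)"
    using A by (intro sum.cong) (auto simp: eps_def)
  finally show ?thesis by simp
qed

lemma card_IM_first_block:
  assumes w: "w \<in> WM s r" and "k \<le> s" "s \<le> r"
  shows "card {i \<in> IM k s w. i \<le> s} = card (positive_indices k w)"
proof -
  \<comment> \<open>position of \<open>w(e\<^sub>i)\<close> in the basis; it lies in the first half iff \<open>w(e\<^sub>i)\<close> is no \<open>e\<^sub>j'\<close>\<close>
  define pos where "pos i = (if 0 < w i then nat (w i) else 2 * s + 1 - nat \<bar>w i\<bar>)" for i
  have ir: "i \<in> {1..r}" if "i \<in> {1..k}" for i
    using that assms(2,3) by auto
  have block: "nat \<bar>w i\<bar> \<in> {1..s}" if "i \<in> {1..k}" for i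
    using WM_range[OF w ir[OF that]] WM_block[OF w ir[OF that]] that assms(2) by auto
  have pos_le: "pos i \<le> s \<longleftrightarrow> 0 < w i" if "i \<in> {1..k}" for i
    using block[OF that] unfolding pos_def by auto
  have "IM k s w = pos ` {1..k}"
    unfolding IM_def pos_def ..
  then have "{i \<in> IM k s w. i \<le> s} = pos ` {i \<in> {1..k}. pos i \<le> s}"
    by auto
  also have "{i \<in> {1..k}. pos i \<le> s} = positive_indices k w"
    unfolding positive_indices_def using pos_le by blast
  also have "pos ` positive_indices k w = (\<lambda>i. nat (w i)) ` positive_indices k w"
    unfolding positive_indices_def pos_def by (rule image_cong) auto
  finally have IM_eq: "{i \<in> IM k s w. i \<le> s} = (\<lambda>i. nat (w i)) ` positive_indices k w" .
  have "inj_on (\<lambda>i. nat (w i)) (positive_indices k w)"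
  proof (rule inj_onI)
    fix i j assume "i \<in> positive_indices k w" "j \<in> positive_indices k w" "nat (w i) = nat (w j)"
    then have "nat \<bar>w i\<bar> = nat \<bar>w j\<bar>" "i \<in> {1..k}" "j \<in> {1..k}"
      unfolding positive_indices_def by auto
    then show "i = j"
      using inj_onD[OF WM_inj[OF w]] ir by blast
  qed
  then show ?thesis
    unfolding IM_eq by (rule card_image)
qed

theorem mainTheorem8:
  fixes k s r :: nat and w :: "nat \<Rightarrow> int"
  assumes "1 \<le> k" and "k \<le> s" and "s < r"
    and "w \<in> WQ k s r"
  shows "evxQ k (chiM k s r w - chiH k s r w) = int (card {i \<in> IM k s w. i \<le> s})"
proof -
  have w: "w \<in> WM s r"
    using assms(4) unfolding WQ_def by blast
  have "evxQ k (chiM k s r w - chiH k s r w) = int (card (positive_indices k w))"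
    unfolding chiM_minus_chiH[OF w assms(2) less_imp_le[OF assms(3)]]
    by (rule evxQ_sum_eps) (auto simp: positive_indices_def)
  also have "\<dots> = int (card {i \<in> IM k s w. i \<le> s})"
    using card_IM_first_block[OF w assms(2) less_imp_le[OF assms(3)]] by simp
  finally show ?thesis .
qed

end
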